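(* The integrality gap of the following LP relaxation of IIK is unbounded: for every constant $C>0$ there is an instance of IIK for which the optimal value of $$\max \sum_{t=1}^T\sum_{i=1}^N v_i x_{i,t}\quad\text{s.t.}\quad \sum_{i=1}^N w_i x_{i,t}\le B_t\ \forall t,\quad x_{i,t-1}\le x_{i,t}\ \forall i,\ t=2,\dots,T,\quad x_{i,t}=0 \text{ whenever } w_i>B_t,\quad x_{i,t}\in[0,1]\ \forall i,t$$ exceeds $C$ times the optimal value of the IIK instance (i.e. of the same program with $x_{i,t}\in\{0,1\}$). *)

theory Defs
  imports Complex_Main
begin

text \<open>An instance of IIK (incremental knapsack): N items with values v i and weights w i
  (i = 1..N), T time periods with capacities B t (t = 1..T), nondecreasing in t.\<close>

definition iik_instance ::
  "nat \<Rightarrow> nat \<Rightarrow> (nat \<Rightarrow> real) \<Rightarrow> (nat \<Rightarrow> real) \<Rightarrow> (nat \<Rightarrow> real) \<Rightarrow> bool" where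
  "iik_instance N T v w B \<longleftrightarrow>
     (\<forall>i\<in>{1..N}. v i > 0 \<and> w i > 0) \<and>
     (\<forall>t\<in>{1..T}. B t > 0) \<and>
     (\<forall>t\<in>{2..T}. B (t - 1) \<le> B t)"

definition lp_feasible ::
  "nat \<Rightarrow> nat \<Rightarrow> (nat \<Rightarrow> real) \<Rightarrow> (nat \<Rightarrow> real) \<Rightarrow> (nat \<Rightarrow> nat \<Rightarrow> real) \<Rightarrow> bool" where
  "lp_feasible N T w B x \<longleftrightarrow>
     (\<forall>t\<in>{1..T}. (\<Sum>i=1..N. w i * x i t) \<le> B t) \<and>
     (\<forall>i\<in>{1..N}. \<forall>t\<in>{2..T}. x i (t - 1) \<le> x i t) \<and>
     (\<forall>i\<in>{1..N}. \<forall>t\<in>{1..T}. w i > B t \<longrightarrow> x i t = 0) \<and>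
     (\<forall>i\<in>{1..N}. \<forall>t\<in>{1..T}. 0 \<le> x i t \<and> x i t \<le> 1)"

definition ip_feasible ::
  "nat \<Rightarrow> nat \<Rightarrow> (nat \<Rightarrow> real) \<Rightarrow> (nat \<Rightarrow> real) \<Rightarrow> (nat \<Rightarrow> nat \<Rightarrow> real) \<Rightarrow> bool" where
  "ip_feasible N T w B x \<longleftrightarrow>
     lp_feasible N T w B x \<and> (\<forall>i\<in>{1..N}. \<forall>t\<in>{1..T}. x i t \<in> {0, 1})"

definition iik_obj ::
  "nat \<Rightarrow> nat \<Rightarrow> (nat \<Rightarrow> real) \<Rightarrow> (nat \<Rightarrow> nat \<Rightarrow> real) \<Rightarrow> real" where
  "iik_obj N T v x = (\<Sum>t=1..T. \<Sum>i=1..N. v i * x i t)"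

definition lp_opt ::
  "nat \<Rightarrow> nat \<Rightarrow> (nat \<Rightarrow> real) \<Rightarrow> (nat \<Rightarrow> real) \<Rightarrow> (nat \<Rightarrow> real) \<Rightarrow> real" where
  "lp_opt N T v w B = Sup (iik_obj N T v ` {x. lp_feasible N T w B x})"

definition ip_opt ::
  "nat \<Rightarrow> nat \<Rightarrow> (nat \<Rightarrow> real) \<Rightarrow> (nat \<Rightarrow> real) \<Rightarrow> (nat \<Rightarrow> real) \<Rightarrow> real" where
  "ip_opt N T v w B = Sup (iik_obj N T v ` {x. ip_feasible N T w B x})"

end

theory Submission
  imports Defs
begin

text \<open>Take items i = 1..n of weight 2^i and value K^i, and let the capacity run through
  the stages b = 1..n, stage b being the value 2^b held for K^(n-b) periods. Putting half of
  every item i \<le> b into the knapsack during stage b is LP-feasible (2^1 + ... + 2^b < 2^(b+1))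
  and earns about K^b/2 per period, i.e. K^n/2 per stage and n K^n/2 in total.
  An integral solution that packs item b during stage b has no room left for anything else,
  and since packed items stay packed it can do so in at most one stage; this yields at most K^n.
  In every other period it only uses items i < b, worth at most n K^(b-1) per period and
  n^2 K^(n-1) altogether. For K = n^2 the gap is therefore at least n/4.\<close>

lemma lp_feasible_mono_time:
  assumes "lp_feasible N T w B x" "i \<in> {1..N}" "1 \<le> s" "s \<le> t" "t \<le> T"
  shows "x i s \<le> x i t"
  using assms(4,5)
proof (induction t rule: dec_induct)
  case base
  then show ?case by simp
next
  case (step m)
  then have "Suc m \<in> {2..T}" using assms(3) by auto
  then have "x i m \<le> x i (Suc m)"
    using assms(1,2) unfolding lp_feasible_def by (metis diff_Suc_1)
  then show ?case using step by simp
qed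

lemma lp_obj_le_lp_opt:
  assumes v: "\<forall>i\<in>{1..N}. v i \<ge> 0" and x: "lp_feasible N T w B x"
  shows "iik_obj N T v x \<le> lp_opt N T v w B"
proof -
  have "bdd_above (iik_obj N T v ` {x. lp_feasible N T w B x})"
  proof (rule bdd_aboveI)
    fix y assume "y \<in> iik_obj N T v ` {x. lp_feasible N T w B x}"
    then obtain x where x: "lp_feasible N T w B x" and y: "y = iik_obj N T v x" by auto
    have "v i * x i t \<le> v i" if "t \<in> {1..T}" "i \<in> {1..N}" for i t
      using x v that unfolding lp_feasible_def by (simp add: mult_left_le)
    then show "y \<le> (\<Sum>t=1..T. \<Sum>i=1..N. v i)"
      unfolding y iik_obj_def by (intro sum_mono) auto
  qed
  then show ?thesis
    unfolding lp_opt_def using x by (intro cSup_upper) auto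
qed

lemma ip_opt_le:
  assumes "\<forall>t\<in>{1..T}. B t \<ge> 0"
    and "\<And>x. ip_feasible N T w B x \<Longrightarrow> iik_obj N T v x \<le> M"
  shows "ip_opt N T v w B \<le> M"
  unfolding ip_opt_def
proof (rule cSup_least)
  have "ip_feasible N T w B (\<lambda>i t. 0)"
    using assms(1) unfolding ip_feasible_def lp_feasible_def by auto
  then show "iik_obj N T v ` {x. ip_feasible N T w B x} \<noteq> {}" by blast
qed (use assms(2) in auto)

lemma ip_feasible_exact_fit_alone:
  assumes x: "ip_feasible N T w B x" and w: "\<forall>j\<in>{1..N}. w j > 0"
    and t: "t \<in> {1..T}" and b: "b \<in> {1..N}" and i: "i \<in> {1..N}" "i \<noteq> b"
    and fit: "w b = B t" and xb: "x b t = 1"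
  shows "x i t = 0"
proof (rule ccontr)
  assume "x i t \<noteq> 0"
  then have xi: "x i t = 1" using x i t unfolding ip_feasible_def by blast
  have "0 \<le> w j * x j t" if "j \<in> {1..N}" for j
    using x w t that unfolding ip_feasible_def lp_feasible_def by (simp add: less_imp_le)
  then have "(\<Sum>j\<in>{i,b}. w j * x j t) \<le> (\<Sum>j=1..N. w j * x j t)"
    using i b by (intro sum_mono2) auto
  also have "\<dots> \<le> B t" using x t unfolding ip_feasible_def lp_feasible_def by blast
  moreover have "w i > 0" using w i by blast
  ultimately show False using xi xb fit i(2) by simp
qed

definition stages :: "nat \<Rightarrow> nat \<Rightarrow> nat list" where
  "stages n K = concat (map (\<lambda>b. replicate (K ^ (n - b)) b) [1..<Suc n])"

text \<open>Periods are numbered from 1, list positions from 0.\<close>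
definition stage :: "nat \<Rightarrow> nat \<Rightarrow> nat \<Rightarrow> nat" where
  "stage n K t = stages n K ! (t - 1)"

lemma sorted_concat_replicate:
  "sorted xs \<Longrightarrow> sorted (concat (map (\<lambda>b. replicate (c b) b) xs))"
  by (induction xs) (auto simp: sorted_append)

lemma stage_mono:
  "1 \<le> s \<Longrightarrow> s \<le> t \<Longrightarrow> t \<le> length (stages n K) \<Longrightarrow> stage n K s \<le> stage n K t"
  unfolding stage_def stages_def
  by (rule sorted_nth_mono[OF sorted_concat_replicate[OF sorted_upt]]) (auto simp: stages_def)

lemma stage_range: "t \<in> {1..length (stages n K)} \<Longrightarrow> stage n K t \<in> {1..n}"
proof -
  assume "t \<in> {1..length (stages n K)}"
  then have "stage n K t \<in> set (stages n K)" unfolding stage_def by (intro nth_mem) auto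
  then show ?thesis unfolding stages_def by auto
qed

lemma sum_shifted_nth:
  "(\<Sum>t=1..length xs. f (xs ! (t - 1))) = sum_list (map f xs)"
proof -
  have "(\<Sum>t=1..length xs. f (xs ! (t - 1))) = (\<Sum>t<length xs. f (xs ! t))"
    using sum.atLeast1_atMost_eq[of "\<lambda>t. f (xs ! (t - 1))" "length xs"] by simp
  then show ?thesis by (simp add: sum_list_sum_nth atLeast0LessThan)
qed

lemma sum_list_concat: "sum_list (concat xss) = sum_list (map sum_list xss)"
  by (induction xss) auto

lemma sum_over_stages:
  "(\<Sum>t=1..length (stages n K). f (stage n K t)) = (\<Sum>b=1..n. real (K ^ (n - b)) * (f b :: real))"
proof -
  have "(\<Sum>t=1..length (stages n K). f (stage n K t)) = sum_list (map f (stages n K))"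
    unfolding stage_def by (rule sum_shifted_nth)
  also have "\<dots> = sum_list (map (\<lambda>b. real (K ^ (n - b)) * f b) [1..<Suc n])"
    unfolding stages_def by (simp add: map_concat sum_list_concat comp_def sum_list_replicate)
  also have "\<dots> = (\<Sum>b=1..n. real (K ^ (n - b)) * f b)"
    by (simp only: sum_set_upt_conv_sum_list_nat[symmetric] set_upt
        atLeastLessThanSuc_atLeastAtMost)
  finally show ?thesis .
qed

lemma sum_over_stages_const:
  assumes "\<And>b. b \<in> {1..n} \<Longrightarrow> real (K ^ (n - b)) * f b = c"
  shows "(\<Sum>t=1..length (stages n K). f (stage n K t)) = real n * c"
proof -
  have "(\<Sum>b=1..n. real (K ^ (n - b)) * f b) = (\<Sum>b=1..n. c)"
    using assms by (intro sum.cong) auto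
  then show ?thesis unfolding sum_over_stages by simp
qed

lemma power_two_less_iff: "(2::real) ^ i < 2 ^ j \<longleftrightarrow> i < j"
  by simp

definition half_prefix :: "nat \<Rightarrow> nat \<Rightarrow> nat \<Rightarrow> nat \<Rightarrow> real" where
  "half_prefix n K i t = (if i \<le> stage n K t then 1/2 else 0)"

lemma lp_feasible_half_prefix:
  "lp_feasible n (length (stages n K)) (\<lambda>i. 2 ^ i) (\<lambda>t. 2 ^ stage n K t) (half_prefix n K)"
  unfolding lp_feasible_def
proof (intro conjI ballI impI)
  fix t assume t: "t \<in> {1..length (stages n K)}"
  define b where "b = stage n K t"
  have "b \<le> n" using stage_range[OF t] b_def by auto
  then have "{1..n} \<inter> {i. i \<le> b} = {1..b}" by auto
  then have "(\<Sum>i=1..n. (2::real) ^ i * half_prefix n K i t) = (\<Sum>i=1..b. (2::real) ^ i) / 2"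
    unfolding half_prefix_def b_def[symmetric]
    by (simp add: if_distrib sum.If_cases sum_divide_distrib)
  also have "(\<Sum>i=1..b. (2::real) ^ i) = 2 ^ Suc b - 2"
    by (induction b) auto
  finally show "(\<Sum>i=1..n. (2::real) ^ i * half_prefix n K i t) \<le> 2 ^ stage n K t"
    using b_def by simp
next
  fix i t assume "i \<in> {1..n}" "t \<in> {2..length (stages n K)}"
  then have "stage n K (t - 1) \<le> stage n K t" by (intro stage_mono) auto
  then show "half_prefix n K i (t - 1) \<le> half_prefix n K i t"
    unfolding half_prefix_def by auto
next
  fix i t assume "(2::real) ^ i > 2 ^ stage n K t"
  then show "half_prefix n K i t = 0" unfolding half_prefix_def power_two_less_iff by simp
qed (auto simp: half_prefix_def)

lemma iik_obj_half_prefix: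
  "iik_obj n (length (stages n K)) (\<lambda>i. real K ^ i) (half_prefix n K) \<ge> real n * real K ^ n / 2"
proof -
  have "real K ^ stage n K t / 2 \<le> (\<Sum>i=1..n. real K ^ i * half_prefix n K i t)"
    if t: "t \<in> {1..length (stages n K)}" for t
    using member_le_sum[of "stage n K t" "{1..n}" "\<lambda>i. real K ^ i * half_prefix n K i t"]
      stage_range[OF t] by (simp add: half_prefix_def)
  then have "(\<Sum>t=1..length (stages n K). real K ^ stage n K t / 2)
      \<le> iik_obj n (length (stages n K)) (\<lambda>i. real K ^ i) (half_prefix n K)"
    unfolding iik_obj_def by (rule sum_mono)
  moreover have "(\<Sum>t=1..length (stages n K). real K ^ stage n K t / 2) = real n * (real K ^ n / 2)"
    by (rule sum_over_stages_const) (auto simp: power_add[symmetric])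
  ultimately show ?thesis by simp
qed

lemma ip_full_stage_unique:
  assumes x: "ip_feasible n (length (stages n K)) (\<lambda>i. 2 ^ i) (\<lambda>t. 2 ^ stage n K t) x"
    and s: "s \<in> {1..length (stages n K)}" and t: "t \<in> {1..length (stages n K)}"
    and xs: "x (stage n K s) s = 1" and xt: "x (stage n K t) t = 1"
  shows "stage n K s = stage n K t"
proof -
  have late_excludes_early: "stage n K s' = stage n K t'"
    if s': "s' \<in> {1..length (stages n K)}" and t': "t' \<in> {1..length (stages n K)}"
      and le: "s' \<le> t'" and xs': "x (stage n K s') s' = 1" and xt': "x (stage n K t') t' = 1"
    for s' t'
  proof (rule ccontr)
    assume ne: "stage n K s' \<noteq> stage n K t'"
    have lp: "lp_feasible n (length (stages n K)) (\<lambda>i. 2 ^ i) (\<lambda>t. 2 ^ stage n K t) x"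
      using x unfolding ip_feasible_def by simp
    have "1 \<le> x (stage n K s') t'"
      using lp_feasible_mono_time[OF lp stage_range[OF s'], where s=s' and t=t'] s' t' le xs'
      by auto
    moreover have "x (stage n K s') t' = 0"
      by (rule ip_feasible_exact_fit_alone[OF x _ t' stage_range[OF t'] stage_range[OF s'] ne _ xt'])
        simp_all
    ultimately show False by simp
  qed
  show ?thesis
    using late_excludes_early[OF s t _ xs xt] late_excludes_early[OF t s _ xt xs] by linarith
qed

lemma ip_period_value_le:
  assumes x: "ip_feasible n (length (stages n K)) (\<lambda>i. 2 ^ i) (\<lambda>t. 2 ^ stage n K t) x"
    and t: "t \<in> {1..length (stages n K)}" and K: "K \<ge> 1"
  shows "(\<Sum>i=1..n. real K ^ i * x i t)
    \<le> (if x (stage n K t) t = 1 then real K ^ stage n K t else 0) + real n * real K ^ (stage n K t - 1)"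
proof -
  define b where "b = stage n K t"
  have b: "b \<in> {1..n}" using stage_range[OF t] b_def by simp
  have x01: "x i t \<in> {0, 1}" if "i \<in> {1..n}" for i
    using x t that unfolding ip_feasible_def by blast
  have above: "x i t = 0" if "i \<in> {1..n}" "b < i" for i
    using x t that unfolding ip_feasible_def lp_feasible_def b_def power_two_less_iff by blast
  show ?thesis
  proof (cases "x b t = 1")
    case True
    have "x i t = 0" if "i \<in> {1..n}" "i \<noteq> b" for i
      by (rule ip_feasible_exact_fit_alone[OF x _ t b that _ True]) (simp_all add: b_def)
    then have "(\<Sum>i=1..n. real K ^ i * x i t) = (\<Sum>i=1..n. if i = b then real K ^ b else 0)"
      using True by (intro sum.cong) auto
    also have "\<dots> = real K ^ b"
      using b by simp
    finally have "(\<Sum>i=1..n. real K ^ i * x i t) = real K ^ b" .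
    then show ?thesis using True b_def by simp
  next
    case False
    have "real K ^ i * x i t \<le> real K ^ (b - 1)" if i: "i \<in> {1..n}" for i
    proof (cases "i < b")
      case True
      have "real K ^ i * x i t \<le> real K ^ i" using x01[OF i] by auto
      also have "\<dots> \<le> real K ^ (b - 1)" using True K by (intro power_increasing) auto
      finally show ?thesis .
    next
      case False
      then have "x i t = 0" using above[OF i] x01[OF i] \<open>x b t \<noteq> 1\<close> by (cases "i = b") auto
      then show ?thesis by simp
    qed
    then have "(\<Sum>i=1..n. real K ^ i * x i t) \<le> real n * real K ^ (b - 1)"
      using sum_mono[of "{1..n}" "\<lambda>i. real K ^ i * x i t" "\<lambda>_. real K ^ (b - 1)"] by simp
    then show ?thesis using False b_def by simp
  qed
qed

lemma ip_full_periods_value_le: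
  assumes x: "ip_feasible n (length (stages n K)) (\<lambda>i. 2 ^ i) (\<lambda>t. 2 ^ stage n K t) x"
  shows "(\<Sum>t=1..length (stages n K). if x (stage n K t) t = 1 then real K ^ stage n K t else 0)
    \<le> real K ^ n"
proof (cases "\<exists>t0\<in>{1..length (stages n K)}. x (stage n K t0) t0 = 1")
  case False
  then show ?thesis by simp
next
  case True
  then obtain t0 where t0: "t0 \<in> {1..length (stages n K)}" "x (stage n K t0) t0 = 1" by blast
  define k where "k = stage n K t0"
  have k: "k \<in> {1..n}" using stage_range[OF t0(1)] k_def by simp
  have "(\<Sum>t=1..length (stages n K). if x (stage n K t) t = 1 then real K ^ stage n K t else 0)
      \<le> (\<Sum>t=1..length (stages n K). if stage n K t = k then real K ^ stage n K t else 0)"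
  proof (rule sum_mono)
    fix t assume t: "t \<in> {1..length (stages n K)}"
    show "(if x (stage n K t) t = 1 then real K ^ stage n K t else 0)
        \<le> (if stage n K t = k then real K ^ stage n K t else 0)"
    proof (cases "x (stage n K t) t = 1")
      case True
      then have "stage n K t = k" using ip_full_stage_unique[OF x t t0(1) True t0(2)] k_def by simp
      then show ?thesis by simp
    qed simp
  qed
  also have "\<dots> = (\<Sum>b=1..n. real (K ^ (n - b)) * (if b = k then real K ^ b else 0))"
    by (rule sum_over_stages)
  also have "\<dots> = real (K ^ (n - k)) * real K ^ k"
    using k by (simp add: if_distrib[where f="\<lambda>y. _ * y"] sum.delta cong: if_cong)
  also have "\<dots> = real K ^ n"
    using k by (simp add: power_add[symmetric])
  finally show ?thesis .
qed

lemma ip_obj_le: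
  assumes x: "ip_feasible n (length (stages n K)) (\<lambda>i. 2 ^ i) (\<lambda>t. 2 ^ stage n K t) x"
    and K: "K \<ge> 1"
  shows "iik_obj n (length (stages n K)) (\<lambda>i. real K ^ i) x
    \<le> real K ^ n + real n * real n * real K ^ (n - 1)"
proof -
  let ?T = "length (stages n K)"
  have rest_part: "(\<Sum>t=1..?T. real n * real K ^ (stage n K t - 1)) = real n * (real n * real K ^ (n - 1))"
  proof (rule sum_over_stages_const)
    fix b assume "b \<in> {1..n}"
    then have "real K ^ (n - b) * real K ^ (b - 1) = real K ^ (n - 1)"
      by (simp add: power_add[symmetric])
    then show "real (K ^ (n - b)) * (real n * real K ^ (b - 1)) = real n * real K ^ (n - 1)"
      by (simp add: mult.left_commute)
  qed
  have "iik_obj n ?T (\<lambda>i. real K ^ i) x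
      \<le> (\<Sum>t=1..?T. (if x (stage n K t) t = 1 then real K ^ stage n K t else 0)
                     + real n * real K ^ (stage n K t - 1))"
    unfolding iik_obj_def by (rule sum_mono) (rule ip_period_value_le[OF x _ K])
  then show ?thesis
    using ip_full_periods_value_le[OF x] rest_part by (simp add: sum.distrib)
qed

lemma iik_instance_stages:
  "K \<ge> 1 \<Longrightarrow> iik_instance n (length (stages n K)) (\<lambda>i. real K ^ i) (\<lambda>i. 2 ^ i) (\<lambda>t. 2 ^ stage n K t)"
  unfolding iik_instance_def using stage_mono by auto

lemma lp_opt_stages_ge:
  "real n * real K ^ n / 2
    \<le> lp_opt n (length (stages n K)) (\<lambda>i. real K ^ i) (\<lambda>i. 2 ^ i) (\<lambda>t. 2 ^ stage n K t)"
proof -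
  have "real n * real K ^ n / 2 \<le> iik_obj n (length (stages n K)) (\<lambda>i. real K ^ i) (half_prefix n K)"
    by (rule iik_obj_half_prefix)
  also have "\<dots> \<le> lp_opt n (length (stages n K)) (\<lambda>i. real K ^ i) (\<lambda>i. 2 ^ i) (\<lambda>t. 2 ^ stage n K t)"
    by (rule lp_obj_le_lp_opt[OF _ lp_feasible_half_prefix]) simp
  finally show ?thesis .
qed

lemma ip_opt_stages_le:
  "K \<ge> 1 \<Longrightarrow> ip_opt n (length (stages n K)) (\<lambda>i. real K ^ i) (\<lambda>i. 2 ^ i) (\<lambda>t. 2 ^ stage n K t)
    \<le> real K ^ n + real n * real n * real K ^ (n - 1)"
  by (rule ip_opt_le) (simp, rule ip_obj_le)

theorem theorem1:
  fixes C :: real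
  assumes "C > 0"
  shows "\<exists>N T v w B. iik_instance N T v w B \<and> lp_opt N T v w B > C * ip_opt N T v w B"
proof -
  define n where "n = nat \<lceil>4 * C\<rceil> + 1"
  define K where "K = n * n"
  let ?lp = "lp_opt n (length (stages n K)) (\<lambda>i. real K ^ i) (\<lambda>i. 2 ^ i) (\<lambda>t. 2 ^ stage n K t)"
  let ?ip = "ip_opt n (length (stages n K)) (\<lambda>i. real K ^ i) (\<lambda>i. 2 ^ i) (\<lambda>t. 2 ^ stage n K t)"
  have n: "real n > 4 * C" "n \<ge> 1" unfolding n_def using assms by linarith+
  then have K: "K \<ge> 1" unfolding K_def by simp
  have "real n * real n * real K ^ (n - 1) = real K ^ n"
    using n(2) unfolding K_def by (simp add: power_eq_if)
  then have "?ip \<le> 2 * real K ^ n"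
    using ip_opt_stages_le[OF K, of n] by simp
  moreover have "C * (2 * real K ^ n) < real n * real K ^ n / 2"
    using n(1) K by simp
  ultimately have "C * ?ip < ?lp"
    using lp_opt_stages_ge[of n K] mult_left_mono[OF _ less_imp_le[OF assms]] by fastforce
  then show ?thesis using iik_instance_stages[OF K] by blast
qed

end
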